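(* Let $A$ be an algebra of Engel type. Then $A$ can be embedded into a prime algebra of Engel type.
   Context: An algebra here is a finite-dimensional vector space $A$ over a field $\Bbbk$ of characteristic zero with finitely many symmetric multilinear operations $\Psi_\ell:A^\ell\to A$, $2\le\ell\le m$ (equivalently, via $x\mapsto x-\sum_\ell\Psi_\ell(x,\dots,x)$, a polynomial self-map of $A$). An ideal is a subspace $I$ with $\Psi_\ell(a_1,\dots,a_\ell)\in I$ whenever some $a_i\in I$. The algebra is prime if it has no nonzero ideals with zero product, where the product of ideals $I,J$ is the span of values of operations with one argument in $I$, one in $J$, and the rest arbitrary. An embedding is an injective linear map compatible with the operations. For $x\in A$ let $\mathrm{Ad}_{\ell-1}(x):y\mapsto\Psi_\ell(y,x,\dots,x)$ and $E_s(x)=\sum \ell_1\cdots\ell_q\,\mathrm{Ad}_{\ell_1-1}(x)\circ\cdots\circ\mathrm{Ad}_{\ell_q-1}(x)$ over all $q\ge1$, $2\le\ell_i\le m$, $\sum(\ell_i-1)=s$. $A$ is of Engel type if there is $s_0$ with $E_s(x)=0$ for all $x\in A$, $s\ge s_0$ (equivalently, the map $x\mapsto x-\sum_\ell\Psi_\ell(x,\dots,x)$ has Jacobian determinant $1$). *)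

theory Defs
  imports Main "HOL-Library.Multiset"
begin

text \<open>Vectors of the standard space k^n are represented as functions nat => k
  vanishing from index n on.  An algebra is given by its dimension n, the bound m
  on the arities, and the family of operations Psi l (applied to lists of l arguments).\<close>

type_synonym 'k vec = "nat \<Rightarrow> 'k"

definition fvec :: "nat \<Rightarrow> ('k::zero) vec set" where
  "fvec n = {v. \<forall>i\<ge>n. v i = 0}"

definition vzero :: "('k::zero) vec" where "vzero = (\<lambda>i. 0)"

definition vadd :: "('k::plus) vec \<Rightarrow> 'k vec \<Rightarrow> 'k vec" where
  "vadd x y = (\<lambda>i. x i + y i)"

definition vscale :: "'k::times \<Rightarrow> 'k vec \<Rightarrow> 'k vec" where
  "vscale c x = (\<lambda>i. c * x i)"

definition is_algebra ::
  "nat \<Rightarrow> nat \<Rightarrow> (nat \<Rightarrow> ('k::field_char_0) vec list \<Rightarrow> 'k vec) \<Rightarrow> bool" where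
  "is_algebra n m Psi \<longleftrightarrow>
     2 \<le> m \<and>
     (\<forall>l\<in>{2..m}. \<forall>xs. length xs = l \<and> set xs \<subseteq> fvec n \<longrightarrow> Psi l xs \<in> fvec n) \<and>
     (\<forall>l\<in>{2..m}. \<forall>xs ys x y c. length xs + length ys + 1 = l \<and> set xs \<subseteq> fvec n \<and>
          set ys \<subseteq> fvec n \<and> x \<in> fvec n \<and> y \<in> fvec n \<longrightarrow>
          Psi l (xs @ [vadd x (vscale c y)] @ ys) =
            vadd (Psi l (xs @ [x] @ ys)) (vscale c (Psi l (xs @ [y] @ ys)))) \<and>
     (\<forall>l\<in>{2..m}. \<forall>xs ys. length xs = l \<and> set xs \<subseteq> fvec n \<and> mset xs = mset ys
          \<longrightarrow> Psi l xs = Psi l ys)"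

definition is_subspace :: "nat \<Rightarrow> ('k::field) vec set \<Rightarrow> bool" where
  "is_subspace n I \<longleftrightarrow> I \<subseteq> fvec n \<and> vzero \<in> I \<and>
     (\<forall>x\<in>I. \<forall>y\<in>I. vadd x y \<in> I) \<and> (\<forall>c. \<forall>x\<in>I. vscale c x \<in> I)"

definition is_ideal ::
  "nat \<Rightarrow> nat \<Rightarrow> (nat \<Rightarrow> ('k::field_char_0) vec list \<Rightarrow> 'k vec) \<Rightarrow> 'k vec set \<Rightarrow> bool" where
  "is_ideal n m Psi I \<longleftrightarrow> is_subspace n I \<and>
     (\<forall>l\<in>{2..m}. \<forall>xs. length xs = l \<and> set xs \<subseteq> fvec n \<and> (\<exists>a\<in>set xs. a \<in> I)
        \<longrightarrow> Psi l xs \<in> I)"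

definition ideal_prod ::
  "nat \<Rightarrow> nat \<Rightarrow> (nat \<Rightarrow> ('k::field_char_0) vec list \<Rightarrow> 'k vec) \<Rightarrow> 'k vec set \<Rightarrow> 'k vec set
     \<Rightarrow> 'k vec set" where
  "ideal_prod n m Psi I J =
     \<Inter>{S. is_subspace n S \<and>
          {Psi l xs | l xs. l \<in> {2..m} \<and> length xs = l \<and> set xs \<subseteq> fvec n \<and>
             (\<exists>i j. i < l \<and> j < l \<and> i \<noteq> j \<and> xs ! i \<in> I \<and> xs ! j \<in> J)} \<subseteq> S}"

definition is_prime_algebra ::
  "nat \<Rightarrow> nat \<Rightarrow> (nat \<Rightarrow> ('k::field_char_0) vec list \<Rightarrow> 'k vec) \<Rightarrow> bool" where
  "is_prime_algebra n m Psi \<longleftrightarrow>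
     (\<forall>I J. is_ideal n m Psi I \<and> is_ideal n m Psi J \<and> ideal_prod n m Psi I J = {vzero}
        \<longrightarrow> I = {vzero} \<or> J = {vzero})"

definition Ad :: "(nat \<Rightarrow> ('k::field_char_0) vec list \<Rightarrow> 'k vec) \<Rightarrow> nat \<Rightarrow> 'k vec \<Rightarrow> 'k vec \<Rightarrow> 'k vec" where
  "Ad Psi l x y = Psi l (y # replicate (l - 1) x)"

definition E_index :: "nat \<Rightarrow> nat \<Rightarrow> nat list set" where
  "E_index m s = {ls. ls \<noteq> [] \<and> set ls \<subseteq> {2..m} \<and> sum_list (map (\<lambda>l. l - 1) ls) = s}"

definition E_op ::
  "nat \<Rightarrow> (nat \<Rightarrow> ('k::field_char_0) vec list \<Rightarrow> 'k vec) \<Rightarrow> nat \<Rightarrow> 'k vec \<Rightarrow> 'k vec \<Rightarrow> 'k vec" where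
  "E_op m Psi s x y = (\<lambda>i. \<Sum>ls\<in>E_index m s.
      of_nat (prod_list ls) * (foldr (\<lambda>l v. Ad Psi l x v) ls y) i)"

definition engel_type ::
  "nat \<Rightarrow> nat \<Rightarrow> (nat \<Rightarrow> ('k::field_char_0) vec list \<Rightarrow> 'k vec) \<Rightarrow> bool" where
  "engel_type n m Psi \<longleftrightarrow>
     (\<exists>s0. \<forall>s\<ge>s0. \<forall>x\<in>fvec n. \<forall>y\<in>fvec n. E_op m Psi s x y = vzero)"

definition is_embedding ::
  "nat \<Rightarrow> nat \<Rightarrow> (nat \<Rightarrow> ('k::field_char_0) vec list \<Rightarrow> 'k vec) \<Rightarrow>
   nat \<Rightarrow> (nat \<Rightarrow> 'k vec list \<Rightarrow> 'k vec) \<Rightarrow> ('k vec \<Rightarrow> 'k vec) \<Rightarrow> bool" where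
  "is_embedding n m Psi n' Psi' f \<longleftrightarrow>
     f ` fvec n \<subseteq> fvec n' \<and> inj_on f (fvec n) \<and>
     (\<forall>x\<in>fvec n. \<forall>y\<in>fvec n. \<forall>c. f (vadd x (vscale c y)) = vadd (f x) (vscale c (f y))) \<and>
     (\<forall>l\<in>{2..m}. \<forall>xs. length xs = l \<and> set xs \<subseteq> fvec n \<longrightarrow> f (Psi l xs) = Psi' l (map f xs))"

end

theory Submission
  imports Defs
begin

text \<open>Embed \<open>A\<close> into \<open>B = A \<oplus> A\<^sup>* \<oplus> \<Bbbk>\<^sup>6\<close>: the operations of \<open>B\<close> are those of \<open>A\<close>
  applied to the \<open>A\<close>-components, plus one extra symmetric bilinear product with values in
  the six-dimensional tail.  This extra product pairs \<open>A\<close> with \<open>A\<^sup>*\<close> into a tail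
  vector \<open>p\<^sub>0\<close>, and is arranged on the tail so that, starting from any nonzero element,
  multiplication by basis vectors always reaches \<open>p\<^sub>1\<close>, while \<open>p\<^sub>1 p\<^sub>1 = p\<^sub>5 \<noteq> 0\<close>.
  Hence every nonzero ideal contains \<open>p\<^sub>1\<close> and any two of them have nonzero product:
  \<open>B\<close> is prime.  For the Engel property, the \<open>A\<close>-component of \<open>E\<^sub>s(x) y\<close> in \<open>B\<close> is
  \<open>E\<^sub>s(x) y\<close> computed in \<open>A\<close>, which vanishes for large \<open>s\<close>; from then on the tail
  component satisfies \<open>E\<^sub>s(x) y = 2 (E\<^sub>s\<^sub>-\<^sub>1(x) y) x\<close>, and right multiplication by \<open>x\<close> is
  nilpotent on the part of the tail where these values live.\<close>

lemma algebra_closed: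
  assumes "is_algebra n m Psi" "l \<in> {2..m}" "length xs = l" "set xs \<subseteq> fvec n"
  shows "Psi l xs \<in> fvec n"
  using assms unfolding is_algebra_def by blast

lemma algebra_linear:
  assumes "is_algebra n m Psi" "l \<in> {2..m}" "length xs + length ys + 1 = l"
    "set xs \<subseteq> fvec n" "set ys \<subseteq> fvec n" "x \<in> fvec n" "y \<in> fvec n"
  shows "Psi l (xs @ [vadd x (vscale c y)] @ ys) =
           vadd (Psi l (xs @ [x] @ ys)) (vscale c (Psi l (xs @ [y] @ ys)))"
  using assms unfolding is_algebra_def by blast

lemma algebra_symmetric:
  assumes "is_algebra n m Psi" "l \<in> {2..m}" "length xs = l" "set xs \<subseteq> fvec n"
    "mset xs = mset ys"
  shows "Psi l xs = Psi l ys"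
  using assms unfolding is_algebra_def by blast

lemma vzero_in_fvec [simp]: "vzero \<in> fvec n"
  by (simp add: fvec_def vzero_def)

lemma fvec_mono: "n \<le> n' \<Longrightarrow> fvec n \<subseteq> fvec n'"
  by (auto simp: fvec_def)

lemma algebra_zero_arg:
  assumes "is_algebra n m Psi" "l \<in> {2..m}" "length xs + length ys + 1 = l"
    "set xs \<subseteq> fvec n" "set ys \<subseteq> fvec n"
  shows "Psi l (xs @ [vzero] @ ys) = vzero"
proof -
  let ?z = "Psi l (xs @ [vzero] @ ys)"
  have "vadd vzero (vscale 1 vzero) = (vzero :: 'a vec)"
    by (simp add: vadd_def vscale_def vzero_def)
  then have "?z = vadd ?z (vscale 1 ?z)"
    using algebra_linear[OF assms, of vzero vzero 1] by simp
  then show ?thesis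
    by (auto simp: vadd_def vscale_def vzero_def fun_eq_iff)
qed

definition vtrunc :: "nat \<Rightarrow> ('k::zero) vec \<Rightarrow> 'k vec" where
  "vtrunc n v = (\<lambda>i. if i < n then v i else 0)"

lemma vtrunc_in_fvec [simp]: "vtrunc n v \<in> fvec n"
  by (simp add: vtrunc_def fvec_def)

lemma vtrunc_fvec: "v \<in> fvec n \<Longrightarrow> vtrunc n v = v"
  by (auto simp: vtrunc_def fvec_def fun_eq_iff)

lemma vtrunc_linear:
  "vtrunc n (vadd x (vscale c y)) = vadd (vtrunc n x) (vscale (c::'k::field) (vtrunc n y))"
  by (auto simp: vtrunc_def vadd_def vscale_def fun_eq_iff)

section \<open>The extension\<close>

text \<open>Coordinates of \<open>B\<close>: \<open>A\<close> occupies \<open>[0,n)\<close>, \<open>A\<^sup>*\<close> occupies \<open>[n,2n)\<close>, and the tail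
  basis vector \<open>p\<^sub>k\<close> is the coordinate \<open>2n+k\<close>, \<open>k < 6\<close>.  In terms of the tail basis the
  extra product is
  \<open>p\<^sub>1p\<^sub>3 = p\<^sub>3p\<^sub>5 = p\<^sub>0\<close>, \<open>p\<^sub>2p\<^sub>3 = p\<^sub>0p\<^sub>4 = p\<^sub>1\<close>, \<open>p\<^sub>1p\<^sub>4 = p\<^sub>4p\<^sub>5 = -p\<^sub>2\<close>, \<open>p\<^sub>1\<^sup>2 = p\<^sub>5\<close>, and
  \<open>a\<phi> = \<phi>(a) p\<^sub>0\<close> for \<open>a \<in> A\<close>, \<open>\<phi> \<in> A\<^sup>*\<close>.\<close>

definition dual_pairing :: "nat \<Rightarrow> ('k::comm_ring_1) vec \<Rightarrow> 'k vec \<Rightarrow> 'k" where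
  "dual_pairing n x y = (\<Sum>j<n. x j * y (n+j) + y j * x (n+j))"

definition ext_prod :: "nat \<Rightarrow> ('k::comm_ring_1) vec \<Rightarrow> 'k vec \<Rightarrow> 'k vec" where
  "ext_prod n x y = (\<lambda>i.
     if i = 2*n then x(2*n+3)*y(2*n+1) + x(2*n+1)*y(2*n+3) + x(2*n+5)*y(2*n+3)
                     + x(2*n+3)*y(2*n+5) + dual_pairing n x y
     else if i = 2*n+1 then x(2*n+3)*y(2*n+2) + x(2*n+2)*y(2*n+3) + x(2*n+4)*y(2*n)
                     + x(2*n)*y(2*n+4)
     else if i = 2*n+2 then -(x(2*n+4)*y(2*n+1) + x(2*n+1)*y(2*n+4) + x(2*n+5)*y(2*n+4)
                     + x(2*n+4)*y(2*n+5))
     else if i = 2*n+5 then x(2*n+1)*y(2*n+1) else 0)"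

definition ext_ops ::
  "nat \<Rightarrow> (nat \<Rightarrow> ('k::field_char_0) vec list \<Rightarrow> 'k vec) \<Rightarrow> nat \<Rightarrow> 'k vec list \<Rightarrow> 'k vec" where
  "ext_ops n Psi l xs =
     (if l = 2 then vadd (Psi 2 (map (vtrunc n) xs)) (ext_prod n (xs!0) (xs!1))
      else Psi l (map (vtrunc n) xs))"

lemma dual_pairing_commute: "dual_pairing n x y = dual_pairing n y x"
  unfolding dual_pairing_def by (simp add: algebra_simps)

lemma ext_prod_commute: "ext_prod n x y = ext_prod n y x"
  unfolding ext_prod_def by (auto simp: fun_eq_iff algebra_simps dual_pairing_commute)

lemma dual_pairing_sum_left:
  assumes "finite R"
  shows "dual_pairing n (\<lambda>j. \<Sum>r\<in>R. c r * f r j) y = (\<Sum>r\<in>R. c r * dual_pairing n (f r) y)"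
  unfolding dual_pairing_def
  by (simp add: sum_distrib_left sum_distrib_right sum.distrib algebra_simps sum.swap[of _ R])

lemma ext_prod_sum_left:
  assumes "finite R"
  shows "ext_prod n (\<lambda>j. \<Sum>r\<in>R. c r * f r j) y i = (\<Sum>r\<in>R. c r * ext_prod n (f r) y i)"
  unfolding ext_prod_def dual_pairing_sum_left[OF assms]
  by (simp add: sum_distrib_right sum.distrib ring_distribs mult.assoc sum_negf sum_subtractf)

lemma ext_prod_linear_left:
  "ext_prod n (vadd x (vscale c y)) z = vadd (ext_prod n x z) (vscale c (ext_prod n y z))"
proof -
  have "dual_pairing n (vadd x (vscale c y)) z = dual_pairing n x z + c * dual_pairing n y z"
    unfolding dual_pairing_def vadd_def vscale_def
    by (simp add: algebra_simps sum.distrib sum_distrib_left)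
  then show ?thesis
    unfolding ext_prod_def by (auto simp: fun_eq_iff algebra_simps vadd_def vscale_def)
qed

lemma ext_prod_linear_right:
  "ext_prod n z (vadd x (vscale c y)) = vadd (ext_prod n z x) (vscale c (ext_prod n z y))"
  using ext_prod_linear_left[of n x c y z] by (simp add: ext_prod_commute)

lemma ext_prod_in_fvec: "ext_prod n x y \<in> fvec (2*n+6)"
  unfolding ext_prod_def fvec_def by auto

lemma ext_prod_below: "i < n \<Longrightarrow> ext_prod n x y i = 0"
  by (simp add: ext_prod_def)

lemma ext_prod_fvec: "x \<in> fvec n \<Longrightarrow> y \<in> fvec n \<Longrightarrow> ext_prod n x y = vzero"
  unfolding ext_prod_def dual_pairing_def by (auto simp: fvec_def vzero_def fun_eq_iff)

lemma length_2_conv: "length xs = 2 \<longleftrightarrow> (\<exists>a b. xs = [a,b])"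
  by (auto simp: numeral_2_eq_2 length_Suc_conv)

lemma mset_pair_eq: "mset [a,b] = mset ys \<Longrightarrow> ys = [a,b] \<or> ys = [b,a]"
proof -
  assume h: "mset [a,b] = mset ys"
  then obtain c d where ys: "ys = [c,d]"
    using mset_eq_length[OF h] length_2_conv by (metis length_Cons list.size(3) numeral_2_eq_2)
  show ?thesis using h unfolding ys by (auto simp: add_eq_conv_ex)
qed

lemma ext_ops_linear:
  assumes A: "is_algebra n m Psi" and l: "l \<in> {2..m}" and len: "length xs + length ys + 1 = l"
  shows "ext_ops n Psi l (xs @ [vadd x (vscale c y)] @ ys) =
           vadd (ext_ops n Psi l (xs @ [x] @ ys)) (vscale c (ext_ops n Psi l (xs @ [y] @ ys)))"
proof -
  let ?P = "\<lambda>v. Psi l (map (vtrunc n) (xs @ [v] @ ys))"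
  let ?Q = "\<lambda>v. ext_prod n ((xs @ [v] @ ys)!0) ((xs @ [v] @ ys)!1)"
  have P: "?P (vadd x (vscale c y)) = vadd (?P x) (vscale c (?P y))"
    using algebra_linear[OF A l, of "map (vtrunc n) xs" "map (vtrunc n) ys" "vtrunc n x" "vtrunc n y"]
      len
    by (auto simp: vtrunc_linear image_subset_iff)
  have "l = 2 \<Longrightarrow> ?Q (vadd x (vscale c y)) = vadd (?Q x) (vscale c (?Q y))"
    using len by (cases xs; cases ys)
      (auto simp: ext_prod_linear_left ext_prod_linear_right)
  moreover have "vadd (vadd a (vscale c b)) (vadd d (vscale c e)) =
                   vadd (vadd a d) (vscale c (vadd b e))" for a b d e :: "'a vec"
    by (simp add: vadd_def vscale_def fun_eq_iff algebra_simps)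
  ultimately show ?thesis
    using P by (auto simp: ext_ops_def)
qed

lemma ext_ops_symmetric:
  assumes A: "is_algebra n m Psi" and l: "l \<in> {2..m}" and len: "length xs = l"
    and perm: "mset xs = mset ys"
  shows "ext_ops n Psi l xs = ext_ops n Psi l ys"
proof -
  have P: "Psi l (map (vtrunc n) xs) = Psi l (map (vtrunc n) ys)"
  proof (rule algebra_symmetric[OF A l])
    show "length (map (vtrunc n) xs) = l" "set (map (vtrunc n) xs) \<subseteq> fvec n"
      using len by auto
    show "mset (map (vtrunc n) xs) = mset (map (vtrunc n) ys)"
      by (simp only: mset_map perm)
  qed
  show ?thesis
  proof (cases "l = 2")
    case True
    then obtain a b where xs: "xs = [a,b]" using len length_2_conv[of xs] by auto
    have "ys = [a,b] \<or> ys = [b,a]" using mset_pair_eq[of a b ys] perm xs by simp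
    then show ?thesis
    proof
      assume "ys = [a,b]"
      then show ?thesis using xs by simp
    next
      assume ys: "ys = [b,a]"
      show ?thesis
        using P True unfolding ext_ops_def xs ys by (simp add: ext_prod_commute[of n a b])
    qed
  next
    case False
    then show ?thesis using P by (simp add: ext_ops_def)
  qed
qed

lemma is_algebra_ext_ops:
  assumes A: "is_algebra n m Psi"
  shows "is_algebra (2*n+6) m (ext_ops n Psi)"
proof -
  have closed: "ext_ops n Psi l xs \<in> fvec (2*n+6)" if "l \<in> {2..m}" "length xs = l" for l xs
  proof -
    have "Psi l (map (vtrunc n) xs) \<in> fvec n"
      by (rule algebra_closed[OF A that(1)]) (auto simp: that)
    then have "Psi l (map (vtrunc n) xs) \<in> fvec (2*n+6)"
      using fvec_mono[of n "2*n+6"] by auto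
    then show ?thesis
      using ext_prod_in_fvec[of n "xs!0" "xs!1"] by (auto simp: ext_ops_def vadd_def fvec_def)
  qed
  have "2 \<le> m" using A by (simp add: is_algebra_def)
  moreover note closed ext_ops_linear[OF A] ext_ops_symmetric[OF A]
  ultimately show ?thesis
    unfolding is_algebra_def by (intro conjI) blast+
qed

lemma embedding_ext_ops:
  assumes A: "is_algebra n m Psi"
  shows "is_embedding n m Psi (2*n+6) (ext_ops n Psi) (\<lambda>x. x)"
proof -
  have "Psi l xs = ext_ops n Psi l xs" if "l \<in> {2..m}" "length xs = l" "set xs \<subseteq> fvec n" for l xs
  proof -
    have "map (vtrunc n) xs = xs" using that(3) by (auto intro!: map_idI vtrunc_fvec)
    moreover have "l = 2 \<Longrightarrow> ext_prod n (xs!0) (xs!1) = vzero"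
      using that by (intro ext_prod_fvec) auto
    ultimately show ?thesis by (simp add: ext_ops_def vadd_def vzero_def)
  qed
  then show ?thesis
    using fvec_mono[of n "2*n+6"] by (simp add: is_embedding_def)
qed

section \<open>Primeness\<close>

definition unit_vec :: "nat \<Rightarrow> ('k::zero_neq_one) vec" where
  "unit_vec k = (\<lambda>i. if i = k then 1 else 0)"

lemma unit_vec_in_fvec: "k < n \<Longrightarrow> unit_vec k \<in> fvec n"
  by (auto simp: unit_vec_def fvec_def)

lemma unit_vec_neq_vzero: "unit_vec k \<noteq> vzero"
  by (auto simp: unit_vec_def vzero_def fun_eq_iff)

lemma vtrunc_unit_vec: "n \<le> k \<Longrightarrow> vtrunc n (unit_vec k) = vzero"
  by (auto simp: vtrunc_def unit_vec_def vzero_def fun_eq_iff)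

lemma vadd_vscale_zero [simp]:
  "vadd u (vscale 0 v) = (u::'k::field vec)" "vadd (vscale 0 v) u = u"
  by (simp_all add: vadd_def vscale_def fun_eq_iff)

lemma dual_pairing_unit_A:
  assumes "j < n" shows "dual_pairing n x (unit_vec j) = x (n+j)"
proof -
  have "dual_pairing n x (unit_vec j) = (\<Sum>i<n. if i = j then x (n+i) else 0)"
    unfolding dual_pairing_def unit_vec_def using assms by (intro sum.cong) auto
  then show ?thesis using assms by simp
qed

lemma dual_pairing_unit_dual:
  assumes "j < n" shows "dual_pairing n x (unit_vec (n+j)) = x j"
proof -
  have "dual_pairing n x (unit_vec (n+j)) = (\<Sum>i<n. if i = j then x i else 0)"
    unfolding dual_pairing_def unit_vec_def by (intro sum.cong) auto
  then show ?thesis using assms by simp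
qed

lemma dual_pairing_unit_tail: "2*n \<le> k \<Longrightarrow> dual_pairing n x (unit_vec k) = 0"
  unfolding dual_pairing_def unit_vec_def by (intro sum.neutral) auto

lemmas dual_pairing_unit_p = dual_pairing_unit_tail[OF order_refl] dual_pairing_unit_tail[OF le_add1]

lemma ext_prod_unit_A:
  assumes "j < n" shows "ext_prod n x (unit_vec j) = vscale (x (n+j)) (unit_vec (2*n))"
  unfolding ext_prod_def dual_pairing_unit_A[OF assms] using assms
  by (auto simp: unit_vec_def vscale_def fun_eq_iff)

lemma ext_prod_unit_dual:
  assumes "j < n" shows "ext_prod n x (unit_vec (n+j)) = vscale (x j) (unit_vec (2*n))"
  unfolding ext_prod_def dual_pairing_unit_dual[OF assms] using assms
  by (auto simp: unit_vec_def vscale_def fun_eq_iff)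

lemma ext_prod_unit_p0: "ext_prod n x (unit_vec (2*n)) = vscale (x(2*n+4)) (unit_vec (2*n+1))"
  unfolding ext_prod_def dual_pairing_unit_p by (auto simp: unit_vec_def vscale_def fun_eq_iff)

lemma ext_prod_unit_p1:
  "ext_prod n x (unit_vec (2*n+1)) = vadd (vadd (vscale (x(2*n+3)) (unit_vec (2*n)))
     (vscale (-x(2*n+4)) (unit_vec (2*n+2)))) (vscale (x(2*n+1)) (unit_vec (2*n+5)))"
  unfolding ext_prod_def dual_pairing_unit_p
  by (auto simp: unit_vec_def vadd_def vscale_def fun_eq_iff)

lemma ext_prod_unit_p2: "ext_prod n x (unit_vec (2*n+2)) = vscale (x(2*n+3)) (unit_vec (2*n+1))"
  unfolding ext_prod_def dual_pairing_unit_p by (auto simp: unit_vec_def vscale_def fun_eq_iff)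

lemma ext_prod_unit_p3:
  "ext_prod n x (unit_vec (2*n+3)) =
     vadd (vscale (x(2*n+1) + x(2*n+5)) (unit_vec (2*n))) (vscale (x(2*n+2)) (unit_vec (2*n+1)))"
  unfolding ext_prod_def dual_pairing_unit_p
  by (auto simp: unit_vec_def vadd_def vscale_def fun_eq_iff)

lemma ext_prod_unit_p4:
  "ext_prod n x (unit_vec (2*n+4)) =
     vadd (vscale (x(2*n)) (unit_vec (2*n+1))) (vscale (-(x(2*n+1) + x(2*n+5))) (unit_vec (2*n+2)))"
  unfolding ext_prod_def dual_pairing_unit_p
  by (auto simp: unit_vec_def vadd_def vscale_def fun_eq_iff)

lemma ext_prod_p1_p1: "ext_prod n (unit_vec (2*n+1)) (unit_vec (2*n+1)) = unit_vec (2*n+5)"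
  unfolding ext_prod_def dual_pairing_unit_p by (auto simp: unit_vec_def fun_eq_iff)

lemma ideal_subset_fvec: "is_ideal n m Psi I \<Longrightarrow> I \<subseteq> fvec n"
  by (simp add: is_ideal_def is_subspace_def)

lemma ideal_mult_right:
  assumes "is_ideal n m Psi I" "2 \<le> m" "x \<in> I" "y \<in> fvec n"
  shows "Psi 2 [x,y] \<in> I"
  using assms ideal_subset_fvec[OF assms(1)] unfolding is_ideal_def by auto

lemma ideal_vscale_cancel:
  assumes "is_ideal n m Psi I" "vscale c v \<in> I" "c \<noteq> 0"
  shows "v \<in> I"
proof -
  have "vscale (inverse c) (vscale c v) \<in> I"
    using assms(1,2) by (simp add: is_ideal_def is_subspace_def)
  moreover have "vscale (inverse c) (vscale c v) = v"
    using assms(3) by (simp add: vscale_def fun_eq_iff)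
  ultimately show ?thesis by simp
qed

lemma tail_coordinate_cases:
  fixes x :: "('k::field) vec"
  assumes "x \<in> fvec (2*n+6)" "x \<noteq> vzero" "\<forall>i<2*n. x i = 0"
  obtains "x(2*n+4) \<noteq> 0" | "x(2*n+3) \<noteq> 0" | "x(2*n+2) \<noteq> 0"
    | "x(2*n+2) = 0" "x(2*n+1) + x(2*n+5) \<noteq> 0"
    | "x(2*n+1) + x(2*n+5) = 0" "x(2*n) \<noteq> 0"
    | "x(2*n+3) = 0" "x(2*n+4) = 0" "x(2*n+1) \<noteq> 0"
proof (rule ccontr)
  assume none: "\<not> thesis"
  have x4: "x(2*n+4) = 0" and x3: "x(2*n+3) = 0" and x2: "x(2*n+2) = 0"
    using none that(1-3) by auto
  have x15: "x(2*n+1) + x(2*n+5) = 0" using none that(4) x2 by auto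
  have x0: "x(2*n) = 0" using none that(5) x15 by auto
  have x1: "x(2*n+1) = 0" using none that(6) x3 x4 by auto
  have x5: "x(2*n+5) = 0" using x15 x1 by simp
  have "x i = 0" for i
  proof -
    consider "i < 2*n" | "i = 2*n" | "i = 2*n+1" | "i = 2*n+2" | "i = 2*n+3" | "i = 2*n+4"
      | "i = 2*n+5" | "2*n+6 \<le> i"
      by linarith
    then show ?thesis
      using assms(1,3) x0 x1 x2 x3 x4 x5 by cases (auto simp: fvec_def)
  qed
  then show False using assms(2) by (simp add: vzero_def fun_eq_iff)
qed

context
  fixes n m :: nat and Psi :: "nat \<Rightarrow> ('k::field_char_0) vec list \<Rightarrow> 'k vec"
  assumes A: "is_algebra n m Psi"
begin

lemma ext_ops_binary_trunc_vzero:
  assumes "vtrunc n x = vzero \<or> vtrunc n y = vzero"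
  shows "ext_ops n Psi 2 [x,y] = ext_prod n x y"
proof -
  have m2: "2 \<in> {2..m}" using A by (simp add: is_algebra_def)
  have "Psi 2 [vtrunc n x, vtrunc n y] = vzero"
    using assms algebra_zero_arg[OF A m2, of "[]" "[vtrunc n y]"]
      algebra_zero_arg[OF A m2, of "[vtrunc n x]" "[]"] by auto
  then show ?thesis by (simp add: ext_ops_def vadd_def vzero_def)
qed

lemma ext_prod_unit_in_ideal:
  assumes I: "is_ideal (2*n+6) m (ext_ops n Psi) I" and x: "x \<in> I"
    and k: "k < 2*n+6" and trunc: "vtrunc n x = vzero \<or> n \<le> k"
  shows "ext_prod n x (unit_vec k) \<in> I"
proof -
  have "ext_ops n Psi 2 [x, unit_vec k] \<in> I"
    using A ideal_mult_right[OF I _ x unit_vec_in_fvec[OF k]] by (simp add: is_algebra_def)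
  then show ?thesis
    using ext_ops_binary_trunc_vzero trunc vtrunc_unit_vec by metis
qed

context
  fixes I assumes I: "is_ideal (2*n+6) m (ext_ops n Psi) I"
begin

lemma ideal_p0_imp_p1: "unit_vec (2*n) \<in> I \<Longrightarrow> unit_vec (2*n+1) \<in> I"
  using ext_prod_unit_in_ideal[OF I, of "unit_vec (2*n)" "2*n+4"]
  by (simp add: ext_prod_unit_p4) (simp add: unit_vec_def vadd_def vscale_def)

lemma ideal_p5_imp_p0: "unit_vec (2*n+5) \<in> I \<Longrightarrow> unit_vec (2*n) \<in> I"
  using ext_prod_unit_in_ideal[OF I, of "unit_vec (2*n+5)" "2*n+3"]
  by (simp add: ext_prod_unit_p3) (simp add: unit_vec_def vadd_def vscale_def)

lemma ideal_p0_if_A_coord: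
  assumes "x \<in> I" "j < n" "x j \<noteq> 0"
  shows "unit_vec (2*n) \<in> I"
  using ext_prod_unit_in_ideal[OF I assms(1), of "n+j"] assms(2,3)
  by (auto simp: ext_prod_unit_dual intro: ideal_vscale_cancel[OF I])

lemma ideal_p0_if_dual_coord:
  assumes "x \<in> I" "vtrunc n x = vzero" "j < n" "x (n+j) \<noteq> 0"
  shows "unit_vec (2*n) \<in> I"
  using ext_prod_unit_in_ideal[OF I assms(1), of j] assms(2-4)
  by (auto simp: ext_prod_unit_A intro: ideal_vscale_cancel[OF I])

lemma ideal_p1_if_tail:
  assumes x: "x \<in> I" "x \<noteq> vzero" and low: "\<forall>i<2*n. x i = 0"
  shows "unit_vec (2*n+1) \<in> I"
proof -
  have "vtrunc n x = vzero" using low by (auto simp: vtrunc_def vzero_def fun_eq_iff)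
  then have mult: "ext_prod n x (unit_vec (2*n+k)) \<in> I" if "k < 6" for k
    using ext_prod_unit_in_ideal[OF I x(1)] that by simp
  have "x \<in> fvec (2*n+6)" using ideal_subset_fvec[OF I] x(1) by blast
  from tail_coordinate_cases[OF this x(2) low] show ?thesis
  proof cases
    case 1
    have "ext_prod n x (unit_vec (2*n)) \<in> I" using mult[of 0] by simp
    then have "vscale (x(2*n+4)) (unit_vec (2*n+1)) \<in> I" unfolding ext_prod_unit_p0 .
    then show ?thesis using 1 by (rule ideal_vscale_cancel[OF I])
  next
    case 2
    have "ext_prod n x (unit_vec (2*n+2)) \<in> I" by (rule mult) simp
    then have "vscale (x(2*n+3)) (unit_vec (2*n+1)) \<in> I" unfolding ext_prod_unit_p2 .
    then show ?thesis using 2 by (rule ideal_vscale_cancel[OF I])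
  next
    case 3
    let ?q = "ext_prod n x (unit_vec (2*n+3))"
    have "ext_prod n ?q (unit_vec (2*n+3)) \<in> I"
      using ext_prod_unit_in_ideal[OF I mult[of 3]] by simp
    moreover have "ext_prod n ?q (unit_vec (2*n+3)) = vscale (x(2*n+2)) (unit_vec (2*n))"
      unfolding ext_prod_unit_p3 by (simp add: unit_vec_def vadd_def vscale_def fun_eq_iff)
    ultimately have "unit_vec (2*n) \<in> I" using 3 by (metis ideal_vscale_cancel[OF I])
    then show ?thesis by (rule ideal_p0_imp_p1)
  next
    case 4
    have "ext_prod n x (unit_vec (2*n+3)) \<in> I" by (rule mult) simp
    then have "vscale (x(2*n+1) + x(2*n+5)) (unit_vec (2*n)) \<in> I"
      unfolding ext_prod_unit_p3 4(1) vadd_vscale_zero .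
    then have "unit_vec (2*n) \<in> I" using 4(2) by (rule ideal_vscale_cancel[OF I])
    then show ?thesis by (rule ideal_p0_imp_p1)
  next
    case 5
    have "ext_prod n x (unit_vec (2*n+4)) \<in> I" by (rule mult) simp
    then have "vscale (x(2*n)) (unit_vec (2*n+1)) \<in> I"
      unfolding ext_prod_unit_p4 5(1) minus_zero vadd_vscale_zero .
    then show ?thesis using 5(2) by (rule ideal_vscale_cancel[OF I])
  next
    case 6
    have "ext_prod n x (unit_vec (2*n+1)) \<in> I" by (rule mult) simp
    then have "vscale (x(2*n+1)) (unit_vec (2*n+5)) \<in> I"
      unfolding ext_prod_unit_p1 6(1,2) minus_zero vadd_vscale_zero .
    then have "unit_vec (2*n+5) \<in> I" using 6(3) by (rule ideal_vscale_cancel[OF I])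
    then show ?thesis by (intro ideal_p0_imp_p1 ideal_p5_imp_p0)
  qed
qed

lemma nonzero_ideal_contains_p1:
  assumes x: "x \<in> I" "x \<noteq> vzero"
  shows "unit_vec (2*n+1) \<in> I"
proof (cases "\<forall>i<2*n. x i = 0")
  case True
  then show ?thesis using ideal_p1_if_tail x by blast
next
  case False
  then obtain i where i: "i < 2*n" "x i \<noteq> 0" by blast
  show ?thesis
  proof (rule ideal_p0_imp_p1, cases "\<forall>j<n. x j = 0")
    case True
    then have "vtrunc n x = vzero" by (auto simp: vtrunc_def vzero_def fun_eq_iff)
    moreover from True i obtain j where "j < n" "i = n+j"
      by (metis add_diff_inverse_nat less_diff_conv2 mult_2 not_le)
    ultimately show "unit_vec (2*n) \<in> I" using ideal_p0_if_dual_coord x(1) i(2) by blast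
  next
    case False
    then show "unit_vec (2*n) \<in> I" using ideal_p0_if_A_coord x(1) by blast
  qed
qed

end

lemma ext_ops_p1_p1: "ext_ops n Psi 2 [unit_vec (2*n+1), unit_vec (2*n+1)] = unit_vec (2*n+5)"
  by (subst ext_ops_binary_trunc_vzero) (simp add: vtrunc_unit_vec, rule ext_prod_p1_p1)

lemma ideal_prod_contains_p5:
  assumes "unit_vec (2*n+1) \<in> I" "unit_vec (2*n+1) \<in> J"
  shows "unit_vec (2*n+5) \<in> ideal_prod (2*n+6) m (ext_ops n Psi) I J"
proof -
  let ?e = "unit_vec (2*n+1) :: 'k vec"
  have "2 \<le> m" using A by (simp add: is_algebra_def)
  moreover have "?e \<in> fvec (2*n+6)" by (rule unit_vec_in_fvec) simp
  moreover have "\<exists>i j. i < 2 \<and> j < 2 \<and> i \<noteq> j \<and> [?e,?e] ! i \<in> I \<and> [?e,?e] ! j \<in> J"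
    using assms by (intro exI[of _ 0] exI[of _ 1]) simp
  ultimately have "ext_ops n Psi 2 [?e,?e] \<in> {ext_ops n Psi l xs | l xs. l \<in> {2..m} \<and>
      length xs = l \<and> set xs \<subseteq> fvec (2*n+6) \<and>
      (\<exists>i j. i < l \<and> j < l \<and> i \<noteq> j \<and> xs ! i \<in> I \<and> xs ! j \<in> J)}"
    by fastforce
  then show ?thesis
    unfolding ideal_prod_def ext_ops_p1_p1 by blast
qed

lemma is_prime_algebra_ext_ops: "is_prime_algebra (2*n+6) m (ext_ops n Psi)"
  unfolding is_prime_algebra_def
proof (intro allI impI)
  fix I J :: "'k vec set"
  assume h: "is_ideal (2*n+6) m (ext_ops n Psi) I \<and> is_ideal (2*n+6) m (ext_ops n Psi) J \<and>
     ideal_prod (2*n+6) m (ext_ops n Psi) I J = {vzero}"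
  have "vzero \<in> I" "vzero \<in> J" using h by (auto simp: is_ideal_def is_subspace_def)
  moreover have False if "x \<in> I" "x \<noteq> vzero" "y \<in> J" "y \<noteq> vzero" for x y
    using ideal_prod_contains_p5[OF nonzero_ideal_contains_p1 nonzero_ideal_contains_p1] h that
      unit_vec_neq_vzero by blast
  ultimately show "I = {vzero} \<or> J = {vzero}" by blast
qed

end

section \<open>The Engel property\<close>

lemma length_le_sum_arities: "set ls \<subseteq> {2..m} \<Longrightarrow> length ls \<le> sum_list (map (\<lambda>l. l - 1) ls)"
  by (induction ls) auto

lemma finite_E_index: "finite (E_index m s)"
proof (rule finite_subset)
  show "E_index m s \<subseteq> {xs. set xs \<subseteq> {2..m} \<and> length xs \<le> s}"
    unfolding E_index_def using length_le_sum_arities by fastforce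
  show "finite {xs. set xs \<subseteq> {2..m} \<and> length xs \<le> s}"
    by (rule finite_lists_length_le) simp
qed

lemma E_index_hd_2:
  assumes "2 \<le> m" "2 \<le> s"
  shows "{ls \<in> E_index m s. hd ls = 2} = Cons 2 ` E_index m (s - 1)"
proof
  show "{ls \<in> E_index m s. hd ls = 2} \<subseteq> Cons 2 ` E_index m (s - 1)"
  proof
    fix ls assume h: "ls \<in> {ls \<in> E_index m s. hd ls = 2}"
    then obtain r where ls: "ls = 2 # r" unfolding E_index_def by (cases ls) auto
    have "r \<noteq> []" using h assms unfolding ls E_index_def by auto
    then have "r \<in> E_index m (s - 1)" using h unfolding ls E_index_def by auto
    then show "ls \<in> Cons 2 ` E_index m (s - 1)" using ls by blast
  qed
  show "Cons 2 ` E_index m (s - 1) \<subseteq> {ls \<in> E_index m s. hd ls = 2}"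
    using assms unfolding E_index_def by auto
qed

definition ext_prod_support :: "nat \<Rightarrow> nat \<Rightarrow> bool" where
  "ext_prod_support n i \<longleftrightarrow> i = 2*n \<or> i = 2*n+1 \<or> i = 2*n+2 \<or> i = 2*n+5"

lemma ext_prod_outside_support: "\<not> ext_prod_support n i \<Longrightarrow> ext_prod n x y i = 0"
  by (auto simp: ext_prod_def ext_prod_support_def)

text \<open>The map \<open>v \<mapsto> 2 v x\<close> on the span of \<open>p\<^sub>0, p\<^sub>1, p\<^sub>2, p\<^sub>5\<close>.\<close>

definition tail_rmult :: "nat \<Rightarrow> ('k::comm_ring_1) vec \<Rightarrow> 'k vec \<Rightarrow> 'k vec" where
  "tail_rmult n x v = (\<lambda>i.
     if i = 2*n then 2*(x(2*n+3)*(v(2*n+1)+v(2*n+5)))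
     else if i = 2*n+1 then 2*(x(2*n+3)*v(2*n+2) + x(2*n+4)*v(2*n))
     else if i = 2*n+2 then -(2*(x(2*n+4)*(v(2*n+1)+v(2*n+5))))
     else if i = 2*n+5 then 2*(x(2*n+1)*v(2*n+1)) else 0)"

lemma double_ext_prod_eq_tail_rmult:
  assumes "\<forall>j. \<not> ext_prod_support n j \<longrightarrow> v j = 0" "ext_prod_support n i"
  shows "2 * ext_prod n v x i = tail_rmult n x v i"
proof -
  have "dual_pairing n v x = 0"
    unfolding dual_pairing_def using assms(1) by (intro sum.neutral) (auto simp: ext_prod_support_def)
  moreover have "v (2*n+3) = 0" "v (2*n+4) = 0" using assms(1) by (auto simp: ext_prod_support_def)
  ultimately show ?thesis using assms(2)
    by (auto simp: ext_prod_def tail_rmult_def ext_prod_support_def algebra_simps)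
qed

lemma tail_rmult_outside_support: "\<not> ext_prod_support n i \<Longrightarrow> tail_rmult n x v i = 0"
  by (auto simp: tail_rmult_def ext_prod_support_def)

text \<open>With \<open>T = tail_rmult n x\<close>: the \<open>p\<^sub>1\<close>-component of \<open>T (T w)\<close> vanishes because its two
  contributions cancel, and the other components of \<open>T w\<close> only depend on the \<open>p\<^sub>1\<close>- and
  \<open>p\<^sub>5\<close>-components of \<open>w\<close>.\<close>

lemma tail_rmult_nilpotent: "(tail_rmult n x ^^ 4) v = (vzero :: 'k::comm_ring_1 vec)"
proof -
  let ?T = "tail_rmult n x"
  have at: "?T w (2*n) = 2*(x(2*n+3)*(w(2*n+1)+w(2*n+5)))"
    "?T w (2*n+1) = 2*(x(2*n+3)*w(2*n+2) + x(2*n+4)*w(2*n))"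
    "?T w (2*n+2) = -(2*(x(2*n+4)*(w(2*n+1)+w(2*n+5))))"
    "?T w (2*n+5) = 2*(x(2*n+1)*w(2*n+1))" for w
    by (simp_all add: tail_rmult_def)
  have p1: "?T (?T w) (2*n+1) = 0" for w
    by (simp only: at) (simp add: algebra_simps)
  let ?w = "?T (?T (?T v))"
  have w1: "?w (2*n+1) = 0" and w5: "?w (2*n+5) = 0"
    using p1[of "?T v"] p1[of v] by (simp_all only: at(4)) simp
  have "?T ?w (2*n) = 0" "?T ?w (2*n+1) = 0" "?T ?w (2*n+2) = 0" "?T ?w (2*n+5) = 0"
    by (simp_all only: at w1 w5 p1) simp_all
  then have "?T ?w i = 0" for i
    using tail_rmult_outside_support[of n i x]
    by (cases "ext_prod_support n i") (auto simp: ext_prod_support_def)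
  then show ?thesis by (simp add: vzero_def fun_eq_iff numeral_eq_Suc)
qed

context
  fixes n m :: nat and Psi :: "nat \<Rightarrow> ('k::field_char_0) vec list \<Rightarrow> 'k vec"
  assumes A: "is_algebra n m Psi"
begin

lemma Ad_ext_ops:
  "Ad (ext_ops n Psi) l x v =
     (if l = 2 then vadd (Ad Psi l (vtrunc n x) (vtrunc n v)) (ext_prod n v x)
      else Ad Psi l (vtrunc n x) (vtrunc n v))"
  by (simp add: Ad_def ext_ops_def)

lemma Ad_in_fvec: "l \<in> {2..m} \<Longrightarrow> Ad Psi l (vtrunc n x) (vtrunc n v) \<in> fvec n"
  unfolding Ad_def by (rule algebra_closed[OF A]) auto

lemma vtrunc_Ad_ext_ops:
  "l \<in> {2..m} \<Longrightarrow> vtrunc n (Ad (ext_ops n Psi) l x v) = Ad Psi l (vtrunc n x) (vtrunc n v)"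
  using Ad_in_fvec unfolding Ad_ext_ops
  by (auto simp: vtrunc_def fun_eq_iff vadd_def fvec_def ext_prod_below)

lemma Ad_ext_ops_above:
  assumes "l \<in> {2..m}" "n \<le> i"
  shows "Ad (ext_ops n Psi) l x v i = (if l = 2 then ext_prod n v x i else 0)"
  using Ad_in_fvec[OF assms(1)] assms(2) unfolding Ad_ext_ops
  by (auto simp: vadd_def fvec_def)

lemma vtrunc_foldr_Ad_ext_ops:
  "set ls \<subseteq> {2..m} \<Longrightarrow> vtrunc n (foldr (\<lambda>l. Ad (ext_ops n Psi) l x) ls y) =
     foldr (\<lambda>l. Ad Psi l (vtrunc n x)) ls (vtrunc n y)"
  by (induction ls) (simp_all add: vtrunc_Ad_ext_ops)

lemma E_op_ext_ops_below:
  assumes "i < n"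
  shows "E_op m (ext_ops n Psi) s x y i = E_op m Psi s (vtrunc n x) (vtrunc n y) i"
  unfolding E_op_def
proof (intro sum.cong refl)
  fix ls assume "ls \<in> E_index m s"
  then have "set ls \<subseteq> {2..m}" by (simp add: E_index_def)
  from vtrunc_foldr_Ad_ext_ops[OF this, of x y]
  have "vtrunc n (foldr (\<lambda>l. Ad (ext_ops n Psi) l x) ls y) i =
      foldr (\<lambda>l. Ad Psi l (vtrunc n x)) ls (vtrunc n y) i" by simp
  with assms show "of_nat (prod_list ls) * foldr (\<lambda>l. Ad (ext_ops n Psi) l x) ls y i =
      of_nat (prod_list ls) * foldr (\<lambda>l. Ad Psi l (vtrunc n x)) ls (vtrunc n y) i"
    by (simp add: vtrunc_def)
qed

lemma E_op_ext_ops_tail_outside_support: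
  assumes "n \<le> i" "\<not> ext_prod_support n i"
  shows "E_op m (ext_ops n Psi) s x y i = 0"
  unfolding E_op_def
proof (intro sum.neutral ballI)
  fix ls assume "ls \<in> E_index m s"
  then obtain l r where "ls = l # r" "l \<in> {2..m}" by (cases ls) (auto simp: E_index_def)
  then show "of_nat (prod_list ls) * foldr (\<lambda>l. Ad (ext_ops n Psi) l x) ls y i = 0"
    using Ad_ext_ops_above assms(1) by (simp add: ext_prod_outside_support[OF assms(2)])
qed

text \<open>Only the binary extra product reaches the tail, so among the index sequences only
  those starting with \<open>2\<close> contribute there.\<close>

lemma E_op_ext_ops_in_support:
  assumes s: "2 \<le> s" and i: "ext_prod_support n i"
  shows "E_op m (ext_ops n Psi) s x y i = 2 * ext_prod n (E_op m (ext_ops n Psi) (s - 1) x y) x i"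
proof -
  let ?F = "\<lambda>l. Ad (ext_ops n Psi) l x"
  let ?g = "\<lambda>ls. of_nat (prod_list ls) * ext_prod n (foldr ?F (tl ls) y) x i :: 'k"
  have m: "2 \<le> m" using A by (simp add: is_algebra_def)
  have ni: "n \<le> i" using i by (auto simp: ext_prod_support_def)
  have "E_op m (ext_ops n Psi) s x y i =
      (\<Sum>ls\<in>E_index m s. of_nat (prod_list ls) * foldr ?F ls y i)"
    by (simp add: E_op_def)
  also have "\<dots> = (\<Sum>ls\<in>E_index m s. if hd ls = 2 then ?g ls else 0)"
  proof (intro sum.cong refl)
    fix ls assume "ls \<in> E_index m s"
    then obtain l r where "ls = l # r" "l \<in> {2..m}" by (cases ls) (auto simp: E_index_def)
    then show "of_nat (prod_list ls) * foldr ?F ls y i = (if hd ls = 2 then ?g ls else 0)"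
      using Ad_ext_ops_above ni by simp
  qed
  also have "\<dots> = (\<Sum>ls\<in>Cons 2 ` E_index m (s - 1). ?g ls)"
    by (simp add: sum.inter_filter[OF finite_E_index, symmetric] E_index_hd_2[OF m s])
  also have "\<dots> = (\<Sum>r\<in>E_index m (s - 1). 2 * (of_nat (prod_list r) * ext_prod n (foldr ?F r y) x i))"
    by (subst sum.reindex) (auto simp: inj_on_def algebra_simps)
  also have "\<dots> = 2 * ext_prod n (E_op m (ext_ops n Psi) (s - 1) x y) x i"
    by (simp add: E_op_def ext_prod_sum_left[OF finite_E_index] sum_distrib_left)
  finally show ?thesis .
qed

context
  fixes s0 assumes s0: "\<forall>s\<ge>s0. \<forall>x\<in>fvec n. \<forall>y\<in>fvec n. E_op m Psi s x y = vzero"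
begin

lemma E_op_ext_ops_outside_support:
  assumes "s0 \<le> s" "\<not> ext_prod_support n i"
  shows "E_op m (ext_ops n Psi) s x y i = 0"
proof (cases "i < n")
  case True
  then show ?thesis using E_op_ext_ops_below s0 assms(1) by (simp add: vzero_def)
qed (use E_op_ext_ops_tail_outside_support assms(2) in simp)

lemma E_op_ext_ops_Suc:
  assumes "s0 < t"
  shows "E_op m (ext_ops n Psi) (Suc t) x y = tail_rmult n x (E_op m (ext_ops n Psi) t x y)"
proof
  fix i
  show "E_op m (ext_ops n Psi) (Suc t) x y i = tail_rmult n x (E_op m (ext_ops n Psi) t x y) i"
  proof (cases "ext_prod_support n i")
    case True
    have "\<forall>j. \<not> ext_prod_support n j \<longrightarrow> E_op m (ext_ops n Psi) t x y j = 0"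
      using E_op_ext_ops_outside_support assms by simp
    then show ?thesis
      using E_op_ext_ops_in_support[of "Suc t"] True assms double_ext_prod_eq_tail_rmult by simp
  next
    case False
    then show ?thesis using E_op_ext_ops_outside_support assms tail_rmult_outside_support by simp
  qed
qed

lemma E_op_ext_ops_add:
  "s0 < t \<Longrightarrow>
    E_op m (ext_ops n Psi) (t + k) x y = (tail_rmult n x ^^ k) (E_op m (ext_ops n Psi) t x y)"
  by (induction k) (simp_all add: E_op_ext_ops_Suc)

end

lemma engel_type_ext_ops:
  assumes "engel_type n m Psi"
  shows "engel_type (2*n+6) m (ext_ops n Psi)"
proof -
  obtain s0 where s0: "\<forall>s\<ge>s0. \<forall>x\<in>fvec n. \<forall>y\<in>fvec n. E_op m Psi s x y = vzero"
    using assms unfolding engel_type_def by blast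
  have "E_op m (ext_ops n Psi) s x y = vzero" if "s0 + 5 \<le> s" for s x y
    using E_op_ext_ops_add[OF s0, of "s - 4" 4] tail_rmult_nilpotent that by simp
  then show ?thesis unfolding engel_type_def by blast
qed

end

theorem mainTheorem6:
  fixes n m :: nat and Psi :: "nat \<Rightarrow> ('k::field_char_0) vec list \<Rightarrow> 'k vec"
  assumes "is_algebra n m Psi" and "engel_type n m Psi"
  shows "\<exists>n' Psi' f. is_algebra n' m Psi' \<and> is_prime_algebra n' m Psi' \<and>
           engel_type n' m Psi' \<and> is_embedding n m Psi n' Psi' f"
  using is_algebra_ext_ops[OF assms(1)] is_prime_algebra_ext_ops[OF assms(1)]
    engel_type_ext_ops[OF assms] embedding_ext_ops[OF assms(1)] by blast

end
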